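(* Assume that $\wp(\phi):=\int_0^\phi g(s)\,ds\to\infty$ as $\phi\to\infty$. Then there is a constant $c$ depending only on the initial data and on $\kappa$ such that every solution satisfies $\|\phi\|_{L^\infty}\le c$.
   Context: $(M,\mathbf{g},\phi)$ is an asymptotically flat solution of the $2+1$ equivariant Einstein-wave map system ($\kappa>0$, target $d\rho^2+g(\rho)^2d\theta^2$, $g$ smooth odd with $g'(0)=1$, $\phi=\rho\circ\Phi\ge0$ with $\phi=0$ on the axis), written in coordinates $(t,r,\theta)$, $-1\le t<0$, with $\mathbf{g}=-e^{2\alpha}dt^2+e^{2\beta}dr^2+r^2d\theta^2$, $\alpha=\beta=0$ on the axis, and with conserved finite energy $E=2\pi\int_0^\infty\tfrac12(e^{-2\alpha}\phi_t^2+e^{-2\beta}\phi_r^2+g(\phi)^2/r^2)\,re^\beta dr$; $\beta$ is bounded above and below by constants depending only on the initial data. *)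

theory Defs
  imports "HOL-Analysis.Analysis"
begin

definition pt :: "(real \<Rightarrow> real \<Rightarrow> real) \<Rightarrow> real \<Rightarrow> real \<Rightarrow> real" where
  "pt f t r = deriv (\<lambda>s. f s r) t"

definition pr :: "(real \<Rightarrow> real \<Rightarrow> real) \<Rightarrow> real \<Rightarrow> real \<Rightarrow> real" where
  "pr f t r = deriv (\<lambda>s. f t s) r"

text \<open>Warping function g of the target d rho^2 + g(rho)^2 d theta^2: smooth, odd, g'(0) = 1.\<close>

definition target_warp :: "(real \<Rightarrow> real) \<Rightarrow> bool" where
  "target_warp g \<longleftrightarrow>
     (\<forall>k x. ((deriv ^^ k) g) differentiable (at x)) \<and>
     (\<forall>x. g (- x) = - g x) \<and> deriv g 0 = 1"

definition wp :: "(real \<Rightarrow> real) \<Rightarrow> real \<Rightarrow> real" where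
  "wp g x = integral {0..x} g"

definition energy_density ::
  "(real \<Rightarrow> real) \<Rightarrow> (real \<Rightarrow> real \<Rightarrow> real) \<Rightarrow> (real \<Rightarrow> real \<Rightarrow> real) \<Rightarrow>
   (real \<Rightarrow> real \<Rightarrow> real) \<Rightarrow> real \<Rightarrow> real \<Rightarrow> real" where
  "energy_density g \<alpha> \<beta> \<phi> t r =
     (1/2) * (exp (-2 * \<alpha> t r) * (pt \<phi> t r)^2 + exp (-2 * \<beta> t r) * (pr \<phi> t r)^2
              + (g (\<phi> t r))^2 / r^2) * r * exp (\<beta> t r)"

definition energy ::
  "(real \<Rightarrow> real) \<Rightarrow> (real \<Rightarrow> real \<Rightarrow> real) \<Rightarrow> (real \<Rightarrow> real \<Rightarrow> real) \<Rightarrow>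
   (real \<Rightarrow> real \<Rightarrow> real) \<Rightarrow> real \<Rightarrow> real" where
  "energy g \<alpha> \<beta> \<phi> t = 2 * pi * integral {0<..} (energy_density g \<alpha> \<beta> \<phi> t)"

text \<open>Solutions on the slab -1 <= t < 0 of the 2+1 equivariant Einstein-wave map system with
 metric -e^{2 alpha} dt^2 + e^{2 beta} dr^2 + r^2 d theta^2, written as the Einstein equations
 G = kappa T (tt, rr, tr components) and the wave map equation, together with the standing
 assumptions: regularity at the axis, alpha = beta = phi = 0 on the axis, phi >= 0, beta bounded,
 finite conserved energy.\<close>

definition EWM_solution ::
  "real \<Rightarrow> (real \<Rightarrow> real) \<Rightarrow> (real \<Rightarrow> real \<Rightarrow> real) \<Rightarrow> (real \<Rightarrow> real \<Rightarrow> real) \<Rightarrow>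
   (real \<Rightarrow> real \<Rightarrow> real) \<Rightarrow> bool" where
  "EWM_solution \<kappa> g \<alpha> \<beta> \<phi> \<longleftrightarrow>
     (\<forall>t\<in>{-1..<0}. \<forall>r>0.
        (\<lambda>s. \<phi> s r) differentiable (at t) \<and> (\<lambda>s. \<alpha> s r) differentiable (at t) \<and>
        (\<lambda>s. \<beta> s r) differentiable (at t) \<and>
        (\<lambda>s. \<phi> t s) differentiable (at r) \<and> (\<lambda>s. \<alpha> t s) differentiable (at r) \<and>
        (\<lambda>s. \<beta> t s) differentiable (at r) \<and>
        (\<lambda>s. exp (\<beta> s r - \<alpha> s r) * pt \<phi> s r) differentiable (at t) \<and>
        (\<lambda>s. s * exp (\<alpha> t s - \<beta> t s) * pr \<phi> t s) differentiable (at r) \<and>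
        pr \<beta> t r = \<kappa> * r / 2 * exp (2 * \<beta> t r) *
          (exp (-2 * \<alpha> t r) * (pt \<phi> t r)^2 + exp (-2 * \<beta> t r) * (pr \<phi> t r)^2
           + (g (\<phi> t r))^2 / r^2) \<and>
        pr \<alpha> t r = \<kappa> * r / 2 * exp (2 * \<beta> t r) *
          (exp (-2 * \<alpha> t r) * (pt \<phi> t r)^2 + exp (-2 * \<beta> t r) * (pr \<phi> t r)^2
           - (g (\<phi> t r))^2 / r^2) \<and>
        pt \<beta> t r = \<kappa> * r * pt \<phi> t r * pr \<phi> t r \<and>
        - pt (\<lambda>s q. exp (\<beta> s q - \<alpha> s q) * pt \<phi> s q) t r
          + (1 / r) * pr (\<lambda>s q. q * exp (\<alpha> s q - \<beta> s q) * pr \<phi> s q) t r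
          = exp (\<alpha> t r + \<beta> t r) * g (\<phi> t r) * deriv g (\<phi> t r) / r^2) \<and>
     (\<forall>t\<in>{-1..<0}.
        continuous_on {0..} (\<phi> t) \<and> continuous_on {0..} (\<alpha> t) \<and>
        continuous_on {0..} (\<beta> t) \<and>
        \<phi> t 0 = 0 \<and> \<alpha> t 0 = 0 \<and> \<beta> t 0 = 0 \<and> (\<forall>r\<ge>0. \<phi> t r \<ge> 0)) \<and>
     (\<exists>B. \<forall>t\<in>{-1..<0}. \<forall>r\<ge>0. \<bar>\<beta> t r\<bar> \<le> B) \<and>
     (\<forall>t\<in>{-1..<0}. energy_density g \<alpha> \<beta> \<phi> t integrable_on {0<..} \<and>
        energy g \<alpha> \<beta> \<phi> t = energy g \<alpha> \<beta> \<phi> (-1))"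

end

theory Submission
  imports Defs
begin

text \<open>The Hamiltonian constraint makes \<open>(1 - e\<^sup>-\<^sup>\<beta>)/\<kappa> - \<wp>(\<phi>)\<close> nondecreasing in \<open>r\<close>:
  its \<open>r\<close>-derivative is \<open>e\<^sup>-\<^sup>\<beta> \<beta>\<^sub>r/\<kappa> - g(\<phi>) \<phi>\<^sub>r\<close>, and by AM-GM the energy density
  appearing in \<open>\<beta>\<^sub>r\<close> dominates \<open>g(\<phi>) \<phi>\<^sub>r\<close>. Since this quantity vanishes on the axis,
  \<open>\<wp>(\<phi>) \<le> (1 - e\<^sup>-\<^sup>\<beta>)/\<kappa> < 1/\<kappa>\<close> everywhere, and \<open>\<wp>(\<phi>) \<rightarrow> \<infinity>\<close> turns this into a
  bound on \<open>\<phi>\<close> that depends only on \<open>\<kappa>\<close> and \<open>g\<close>, not even on the initial data.\<close>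

lemma continuous_on_UNIV_if_target_warp:
  assumes "target_warp g"
  shows "continuous_on UNIV g"
proof -
  have "\<forall>x. g differentiable (at x)"
    using assms unfolding target_warp_def by (metis funpow_0)
  then show ?thesis
    by (simp add: continuous_at_imp_continuous_on differentiable_imp_continuous_within)
qed

lemma wp_has_real_derivative:
  assumes "continuous_on UNIV g" and "x \<ge> 0"
  shows "(wp g has_real_derivative g x) (at x within {0..})"
proof -
  have "(wp g has_real_derivative g x) (at x within {0..x+1})"
    unfolding wp_def[abs_def] using assms
    by (intro integral_has_real_derivative continuous_on_subset[OF assms(1)]) auto
  moreover have "at x within {0..x+1} = at x within {0..}"
    by (rule at_within_nhd[of _ "{x-1<..<x+1}"]) auto
  ultimately show ?thesis by simp
qed

lemma continuous_on_wp:
  assumes "continuous_on UNIV g"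
  shows "continuous_on {0..} (wp g)"
  using wp_has_real_derivative[OF assms]
  by (metis atLeast_iff continuous_on_eq_continuous_within DERIV_continuous)

lemma wp_comp_has_real_derivative:
  assumes "continuous_on UNIV g" and "(f has_real_derivative f') (at s)"
    and "open S" and "s \<in> S" and "f ` S \<subseteq> {0..}"
  shows "((\<lambda>x. wp g (f x)) has_real_derivative g (f s) * f') (at s)"
proof -
  have "(wp g has_real_derivative g (f s)) (at (f s) within f ` S)"
    by (rule has_field_derivative_subset[OF wp_has_real_derivative[OF assms(1)]])
      (use assms(4,5) in auto)
  then have "(wp g \<circ> f has_real_derivative g (f s) * f') (at s within S)"
    by (rule DERIV_image_chain[OF _ has_field_derivative_at_within[OF assms(2)]])
  then show ?thesis
    by (simp only: o_def at_within_open[OF assms(4,3)])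
qed

lemma product_le_energy_density:
  fixes s u A P G :: real
  assumes "s > 0" and "u > 0" and "A \<ge> 0"
  shows "G * P \<le> s / 2 * (1/u) * (A + u^2 * P^2 + G^2 / s^2)"
proof -
  have "0 \<le> (s * u * P - G)^2 / (2 * s * u)" using assms by simp
  also have "\<dots> = s/2 * (1/u) * (u^2 * P^2 + G^2 / s^2) - G * P"
    using assms by (simp add: field_simps power2_eq_square)
  finally have "G * P \<le> s/2 * (1/u) * (u^2 * P^2 + G^2 / s^2)" by simp
  also have "\<dots> \<le> s/2 * (1/u) * (A + u^2 * P^2 + G^2 / s^2)"
    using assms by (intro mult_left_mono) auto
  finally show ?thesis .
qed

lemma hamiltonian_constraint_bound:
  fixes \<kappa> s a b b' T P G :: real
  assumes "\<kappa> > 0" and "s > 0"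
    and "b' = \<kappa> * s / 2 * exp (2 * b) *
               (exp (-2 * a) * T^2 + exp (-2 * b) * P^2 + G^2 / s^2)"
  shows "G * P \<le> exp (- b) * b' / \<kappa>"
proof -
  define u where "u = exp (- b)"
  have "exp (- b) * exp (2 * b) = exp (- b + 2 * b)" "exp (- b + - b) = exp (- b) * exp (- b)"
    by (simp_all only: exp_add)
  then have u: "u > 0" "exp (- b) * exp (2 * b) = 1/u" "exp (-2 * b) = u^2"
    by (simp_all add: u_def power2_eq_square exp_minus divide_inverse)
  define X where "X = exp (-2 * a) * T^2 + u^2 * P^2 + G^2 / s^2"
  have "exp (- b) * b' / \<kappa> = s / 2 * (exp (- b) * exp (2 * b)) * X"
    using assms(1) unfolding assms(3) X_def u(3) by simp
  also have "\<dots> = s / 2 * (1/u) * X"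
    by (simp only: u(2))
  finally have "exp (- b) * b' / \<kappa> = s / 2 * (1/u) * X" .
  moreover have "G * P \<le> s / 2 * (1/u) * X"
    unfolding X_def using assms(2) u(1) by (intro product_le_energy_density) auto
  ultimately show ?thesis by simp
qed
lemma wp_le_mass:
  assumes "\<kappa> > 0" and "continuous_on UNIV g" and sol: "EWM_solution \<kappa> g \<alpha> \<beta> \<phi>"
    and t: "t \<in> {-1..<0}" and r: "r \<ge> 0"
  shows "wp g (\<phi> t r) \<le> (1 - exp (- \<beta> t r)) / \<kappa>"
proof -
  define h where "h s = (1 - exp (- \<beta> t s)) / \<kappa> - wp g (\<phi> t s)" for s
  have radial: "\<And>s. s > 0 \<Longrightarrow> (\<lambda>q. \<phi> t q) differentiable (at s) \<and>
      (\<lambda>q. \<beta> t q) differentiable (at s) \<and>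
      pr \<beta> t s = \<kappa> * s / 2 * exp (2 * \<beta> t s) *
        (exp (-2 * \<alpha> t s) * (pt \<phi> t s)^2 + exp (-2 * \<beta> t s) * (pr \<phi> t s)^2
         + (g (\<phi> t s))^2 / s^2)"
    using sol t unfolding EWM_solution_def by blast
  have axis: "continuous_on {0..} (\<phi> t)" "continuous_on {0..} (\<beta> t)"
      "\<phi> t 0 = 0" "\<beta> t 0 = 0" "\<And>s. s \<ge> 0 \<Longrightarrow> \<phi> t s \<ge> 0"
    using sol t unfolding EWM_solution_def by blast+
  have h_cont: "continuous_on {0..r} h"
  proof -
    have wp_cont: "continuous_on {0..r} (\<lambda>x. wp g (\<phi> t x))"
      by (rule continuous_on_compose2[OF continuous_on_wp[OF assms(2)]
            continuous_on_subset[OF axis(1)]])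
        (use axis(5) in \<open>auto simp: image_subset_iff\<close>)
    have \<beta>_cont: "continuous_on {0..r} (\<lambda>x. \<beta> t x)"
      using axis(2) by (rule continuous_on_subset) auto
    show ?thesis
      unfolding h_def[abs_def] using assms(1)
      by (intro continuous_on_diff continuous_on_divide continuous_on_const
          continuous_on_exp continuous_on_minus wp_cont \<beta>_cont) auto
  qed
  have h_mono: "\<exists>y. (h has_real_derivative y) (at s) \<and> y \<ge> 0" if s: "0 < s" for s
  proof -
    have d\<beta>: "(\<beta> t has_real_derivative pr \<beta> t s) (at s)"
      and d\<phi>: "(\<phi> t has_real_derivative pr \<phi> t s) (at s)"
      using radial[OF s] by (simp_all add: pr_def DERIV_deriv_iff_real_differentiable)
    have dw: "((\<lambda>x. wp g (\<phi> t x)) has_real_derivative g (\<phi> t s) * pr \<phi> t s) (at s)"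
      by (rule wp_comp_has_real_derivative[OF assms(2) d\<phi>, of "{0<..}"])
        (use s axis(5) in \<open>auto simp: image_subset_iff\<close>)
    have dexp: "((\<lambda>x. exp (- \<beta> t x)) has_real_derivative exp (- \<beta> t s) * - pr \<beta> t s) (at s)"
      by (rule DERIV_chain2[OF DERIV_exp DERIV_minus[OF d\<beta>]])
    have "(h has_real_derivative
        (0 - exp (- \<beta> t s) * - pr \<beta> t s) / \<kappa> - g (\<phi> t s) * pr \<phi> t s) (at s)"
      unfolding h_def[abs_def]
      by (rule DERIV_diff[OF DERIV_cdivide[OF DERIV_diff[OF DERIV_const dexp]] dw])
    then have "(h has_real_derivative exp (- \<beta> t s) * pr \<beta> t s / \<kappa> - g (\<phi> t s) * pr \<phi> t s) (at s)"
      by simp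
    moreover have "g (\<phi> t s) * pr \<phi> t s \<le> exp (- \<beta> t s) * pr \<beta> t s / \<kappa>"
      by (rule hamiltonian_constraint_bound[OF assms(1) s]) (use radial[OF s] in blast)
    ultimately show ?thesis by auto
  qed
  have "h 0 \<le> h r"
    by (rule DERIV_nonneg_imp_increasing_open[OF r h_mono h_cont])
  moreover have "h 0 = 0"
    unfolding h_def axis(3,4) by (simp add: wp_def)
  ultimately show ?thesis
    unfolding h_def by linarith
qed

lemma bounded_sublevel_if_filterlim_at_top:
  fixes f :: "real \<Rightarrow> real" and C :: real
  assumes "filterlim f at_top at_top"
  obtains N where "\<And>x. f x \<le> C \<Longrightarrow> x < N"
proof -
  have "eventually (\<lambda>x. C + 1 \<le> f x) at_top"
    using assms by (simp add: filterlim_at_top)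
  then obtain N where N: "\<And>x. x \<ge> N \<Longrightarrow> C + 1 \<le> f x"
    by (auto simp: eventually_at_top_linorder)
  have "x < N" if "f x \<le> C" for x
  proof (rule ccontr)
    assume "\<not> x < N"
    with N[of x] that show False by simp
  qed
  then show ?thesis by (rule that)
qed

theorem mainTheorem7:
  fixes \<kappa> :: real and g :: "real \<Rightarrow> real" and \<phi>0 \<phi>1 :: "real \<Rightarrow> real"
  assumes "\<kappa> > 0" and "target_warp g" and "filterlim (wp g) at_top at_top"
  shows "\<exists>c. \<forall>\<alpha> \<beta> \<phi>.
           EWM_solution \<kappa> g \<alpha> \<beta> \<phi> \<and> (\<forall>r\<ge>0. \<phi> (-1) r = \<phi>0 r) \<and>
           (\<forall>r>0. pt \<phi> (-1) r = \<phi>1 r)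
           \<longrightarrow> (\<forall>t\<in>{-1..<0}. \<forall>r\<ge>0. \<bar>\<phi> t r\<bar> \<le> c)"
proof -
  have cg: "continuous_on UNIV g"
    using assms(2) by (rule continuous_on_UNIV_if_target_warp)
  obtain N where N: "\<And>x. wp g x \<le> 1 / \<kappa> \<Longrightarrow> x < N"
    using bounded_sublevel_if_filterlim_at_top[OF assms(3), where C = "1 / \<kappa>"] by blast
  show ?thesis
  proof (intro exI[of _ N] allI impI ballI)
    fix \<alpha> \<beta> \<phi> :: "real \<Rightarrow> real \<Rightarrow> real" and t r :: real
    assume "EWM_solution \<kappa> g \<alpha> \<beta> \<phi> \<and> (\<forall>r\<ge>0. \<phi> (-1) r = \<phi>0 r) \<and>
           (\<forall>r>0. pt \<phi> (-1) r = \<phi>1 r)" and t: "t \<in> {-1..<0}" and r: "r \<ge> 0"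
    then have sol: "EWM_solution \<kappa> g \<alpha> \<beta> \<phi>" by blast
    have "wp g (\<phi> t r) \<le> (1 - exp (- \<beta> t r)) / \<kappa>"
      using wp_le_mass[OF assms(1) cg sol t r] .
    also have "\<dots> \<le> 1 / \<kappa>"
      using assms(1) by (simp add: divide_right_mono)
    finally have "\<phi> t r < N" by (rule N)
    moreover have "\<phi> t r \<ge> 0" using sol t r unfolding EWM_solution_def by blast
    ultimately show "\<bar>\<phi> t r\<bar> \<le> N" by simp
  qed
qed

end
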